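(* Let $L$ be a second-order linear partial differential operator in $\mathbb{R}^n$ with decomposable principal symbol, and suppose $L = X_1X_2 - H$ with first-order operators $X_1, X_2, H$ such that $[H,X_2] = \varkappa H + \varrho X_2$ for some functions $\varkappa,\varrho\in\mathbf{F}$ (i.e. $L$ admits the Dini transformation with resulting operator $L_{Dini} = X_2X_1 - H + \varkappa X_1 + \varrho$). Then there exists a function $\alpha\in\mathbf{F}$ such that, writing $L = (X_1+\alpha)X_2 - (H+\alpha X_2) = \widetilde{X}_1X_2 - \widetilde{H}$, one has $[\widetilde{H},X_2] = \psi\widetilde{H}$ with $\psi=\varkappa$, so that $L$ admits the Intertwining Laplace Transformation (with $\omega=\psi$) whose resulting operator is $L_1 = X_2\widetilde{X}_1 + \psi\widetilde{X}_1 - \widetilde{H} = L_{Dini}$.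
   Context: $\mathbf{F}$ is a differentially closed field of functions of $x_1,\ldots,x_n$; operators have coefficients in $\mathbf{F}$; $[A,B]=AB-BA$. An Intertwining Laplace Transformation of $L = X_1X_2 - H$ ($H\ne0$) is defined when $\omega=-[X_2,H]H^{-1}$ (computed in the skew Ore field of fractions of the operator ring) is a differential operator, and it produces $L_1 = X_2X_1+\omega X_1 - H$. Decomposable principal symbol means the principal symbol is a product of two polynomials linear in the symbol variables. *)

theory Defs
  imports Main
begin

text \<open>
  The field F is modelled by a type 'a of class field_char_0 equipped with
  n derivations D 0, ..., D (n-1) (D i is the partial derivative in x_(i+1)).
  Linear differential operators are modelled by their action on F,
  i.e. as maps 'a => 'a; the product of operators is composition.
\<close>

definition diff_field :: "nat \<Rightarrow> (nat \<Rightarrow> 'a::field \<Rightarrow> 'a) \<Rightarrow> bool" where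
  "diff_field n D \<longleftrightarrow>
     (\<forall>i<n. (\<forall>u v. D i (u + v) = D i u + D i v) \<and>
            (\<forall>u v. D i (u * v) = D i u * v + u * D i v)) \<and>
     (\<forall>i<n. \<forall>j<n. \<forall>u. D i (D j u) = D j (D i u))"

text \<open>F is a field of functions of x_1..x_n: it contains the coordinate functions.\<close>
definition has_coordinates :: "nat \<Rightarrow> (nat \<Rightarrow> 'a::field \<Rightarrow> 'a) \<Rightarrow> bool" where
  "has_coordinates n D \<longleftrightarrow>
     (\<exists>x :: nat \<Rightarrow> 'a. \<forall>i<n. \<forall>j<n. D j (x i) = (if i = j then 1 else 0))"

text \<open>Consequence of differential closedness used here:
  every linear first-order PDE  sum_i b_i D_i u + c u = f  with non-vanishing
  principal part has a solution different from any prescribed element g.\<close>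
definition linear_pde_closed :: "nat \<Rightarrow> (nat \<Rightarrow> 'a::field \<Rightarrow> 'a) \<Rightarrow> bool" where
  "linear_pde_closed n D \<longleftrightarrow>
     (\<forall>(b :: nat \<Rightarrow> 'a) c f g. (\<exists>i<n. b i \<noteq> 0) \<longrightarrow>
        (\<exists>u. (\<Sum>i<n. b i * D i u) + c * u = f \<and> u \<noteq> g))"

definition op1 :: "nat \<Rightarrow> (nat \<Rightarrow> 'a::field \<Rightarrow> 'a) \<Rightarrow> 'a \<Rightarrow> (nat \<Rightarrow> 'a) \<Rightarrow> 'a \<Rightarrow> 'a" where
  "op1 n D a0 a = (\<lambda>u. a0 * u + (\<Sum>i<n. a i * D i u))"

definition order_le1 :: "nat \<Rightarrow> (nat \<Rightarrow> 'a::field \<Rightarrow> 'a) \<Rightarrow> ('a \<Rightarrow> 'a) \<Rightarrow> bool" where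
  "order_le1 n D X \<longleftrightarrow> (\<exists>a0 a. X = op1 n D a0 a)"

definition first_order :: "nat \<Rightarrow> (nat \<Rightarrow> 'a::field \<Rightarrow> 'a) \<Rightarrow> ('a \<Rightarrow> 'a) \<Rightarrow> bool" where
  "first_order n D X \<longleftrightarrow> (\<exists>a0 a. (\<exists>i<n. a i \<noteq> 0) \<and> X = op1 n D a0 a)"

definition diff_op :: "nat \<Rightarrow> (nat \<Rightarrow> 'a::field \<Rightarrow> 'a) \<Rightarrow> ('a \<Rightarrow> 'a) \<Rightarrow> bool" where
  "diff_op n D P \<longleftrightarrow> (\<exists>(ms :: ('a \<times> nat list) list).
      (\<forall>m\<in>set ms. \<forall>i\<in>set (snd m). i < n) \<and>
      P = (\<lambda>u. \<Sum>m\<leftarrow>ms. fst m * foldr (\<lambda>i v. D i v) (snd m) u))"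

definition mul_fn :: "'a::field \<Rightarrow> 'a \<Rightarrow> 'a" where
  "mul_fn f = (\<lambda>u. f * u)"

definition op_add :: "('a::field \<Rightarrow> 'a) \<Rightarrow> ('a \<Rightarrow> 'a) \<Rightarrow> 'a \<Rightarrow> 'a" where
  "op_add A B = (\<lambda>u. A u + B u)"

definition op_sub :: "('a::field \<Rightarrow> 'a) \<Rightarrow> ('a \<Rightarrow> 'a) \<Rightarrow> 'a \<Rightarrow> 'a" where
  "op_sub A B = (\<lambda>u. A u - B u)"

definition op_zero :: "'a::field \<Rightarrow> 'a" where
  "op_zero = (\<lambda>u. 0)"

definition comm :: "('a::field \<Rightarrow> 'a) \<Rightarrow> ('a \<Rightarrow> 'a) \<Rightarrow> 'a \<Rightarrow> 'a" where
  "comm A B = op_sub (A \<circ> B) (B \<circ> A)"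

text \<open>Intertwining Laplace Transformation of L = X1 X2 - H with coefficient omega
  and result L1: H is non-zero, omega is a differential operator with
  omega = -[X2,H] H^(-1) in the Ore field of fractions (equivalently
  omega H = -[X2,H], since H is non-zero), and L1 = X2 X1 + omega X1 - H.\<close>
definition ILT :: "nat \<Rightarrow> (nat \<Rightarrow> 'a::field \<Rightarrow> 'a) \<Rightarrow> ('a \<Rightarrow> 'a) \<Rightarrow> ('a \<Rightarrow> 'a) \<Rightarrow> ('a \<Rightarrow> 'a)
     \<Rightarrow> ('a \<Rightarrow> 'a) \<Rightarrow> ('a \<Rightarrow> 'a) \<Rightarrow> bool" where
  "ILT n D X1 X2 H \<omega> L1 \<longleftrightarrow>
     H \<noteq> op_zero \<and> diff_op n D \<omega> \<and>
     \<omega> \<circ> H = op_sub op_zero (comm X2 H) \<and>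
     L1 = op_sub (op_add (X2 \<circ> X1) (\<omega> \<circ> X1)) H"

end

theory Submission
  imports Defs
begin

text \<open>
  Writing \<open>X\<^sub>2 = a\<^sub>0 + \<xi>\<close> with \<open>\<xi>\<close> its vector field part, one has \<open>[X\<^sub>2, \<alpha>] = \<xi>(\<alpha>)\<close>, so the
  gauge \<open>H\<^sub>\<alpha> = H + \<alpha>X\<^sub>2\<close> satisfies \<open>[H\<^sub>\<alpha>, X\<^sub>2] = \<kappa>H\<^sub>\<alpha> + (\<rho> - \<xi>(\<alpha>) - \<kappa>\<alpha>)X\<^sub>2\<close>.
  Choosing \<open>\<alpha>\<close> as a solution of the first-order equation \<open>\<xi>(\<alpha>) + \<kappa>\<alpha> = \<rho>\<close> kills the
  last term, and expanding \<open>X\<^sub>2(X\<^sub>1 + \<alpha>) + \<kappa>(X\<^sub>1 + \<alpha>) - H\<^sub>\<alpha>\<close> with the same identity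
  gives \<open>L\<^sub>D\<^sub>i\<^sub>n\<^sub>i\<close>. Since \<open>X\<^sub>2 \<noteq> 0\<close>, at most one \<open>\<alpha>\<close> makes \<open>H\<^sub>\<alpha>\<close> vanish, and differential
  closedness provides a solution avoiding it.
\<close>

definition vector_field :: "nat \<Rightarrow> (nat \<Rightarrow> 'a::field \<Rightarrow> 'a) \<Rightarrow> (nat \<Rightarrow> 'a) \<Rightarrow> 'a \<Rightarrow> 'a" where
  "vector_field n D a u = (\<Sum>i<n. a i * D i u)"

lemma op1_add:
  assumes "diff_field n D"
  shows "op1 n D a0 a (u + v) = op1 n D a0 a u + op1 n D a0 a v"
proof -
  have "(\<Sum>i<n. a i * D i (u + v)) = (\<Sum>i<n. a i * D i u + a i * D i v)"
    using assms by (intro sum.cong) (auto simp: diff_field_def distrib_left)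
  then show ?thesis by (simp add: op1_def sum.distrib algebra_simps)
qed

lemma op1_mult:
  assumes "diff_field n D"
  shows "op1 n D a0 a (c * v) = c * op1 n D a0 a v + vector_field n D a c * v"
proof -
  have "(\<Sum>i<n. a i * D i (c * v)) = (\<Sum>i<n. (a i * D i c) * v + c * (a i * D i v))"
    using assms by (intro sum.cong) (auto simp: diff_field_def algebra_simps)
  also have "\<dots> = vector_field n D a c * v + c * (\<Sum>i<n. a i * D i v)"
    by (simp add: vector_field_def sum.distrib sum_distrib_left sum_distrib_right)
  finally show ?thesis by (simp add: op1_def algebra_simps)
qed

lemma diff_field_D_one:
  assumes "diff_field n D" "i < n"
  shows "D i 1 = 0"
proof -
  have "D i (1 * 1) = D i 1 * 1 + 1 * D i 1"
    using assms unfolding diff_field_def by blast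
  then have "D i 1 + 0 = D i 1 + D i 1" by simp
  then show ?thesis by (metis add_left_imp_eq)
qed

lemma first_order_nonzero:
  assumes "diff_field n D" "has_coordinates n D" "first_order n D X"
  shows "\<exists>u. X u \<noteq> 0"
proof -
  obtain a0 a where a: "\<exists>i<n. a i \<noteq> 0" and X: "X = op1 n D a0 a"
    using assms(3) by (auto simp: first_order_def)
  obtain x :: "nat \<Rightarrow> 'a" where x: "\<forall>i<n. \<forall>j<n. D j (x i) = (if i = j then 1 else 0)"
    using assms(2) by (auto simp: has_coordinates_def)
  from a obtain i where i: "i < n" "a i \<noteq> 0" by blast
  show ?thesis
  proof (cases "a0 = 0")
    case False
    have "X 1 = a0" using diff_field_D_one[OF assms(1)] by (simp add: X op1_def)
    with False show ?thesis by blast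
  next
    case True
    have "(\<Sum>j<n. a j * D j (x i)) = (\<Sum>j<n. if j = i then a i else 0)"
      using x i by (intro sum.cong) auto
    then have "X (x i) = a i" using i by (simp add: X op1_def True)
    with i show ?thesis by metis
  qed
qed

lemma gauge_zero_unique:
  assumes "op_add H (mul_fn \<alpha> \<circ> X) = op_zero" "op_add H (mul_fn \<beta> \<circ> X) = op_zero"
    and "X u \<noteq> 0"
  shows "\<alpha> = \<beta>"
proof -
  have "H u + \<alpha> * X u = H u + \<beta> * X u"
    using assms(1,2) by (simp add: fun_eq_iff op_add_def mul_fn_def op_zero_def)
  with assms(3) show ?thesis by simp
qed

lemma comm_gauge:
  assumes "diff_field n D" "X = op1 n D a0 a"
    and "comm H X = op_add (mul_fn \<kappa> \<circ> H) (mul_fn \<rho> \<circ> X)"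
  shows "comm (op_add H (mul_fn \<alpha> \<circ> X)) X
    = op_add (mul_fn \<kappa> \<circ> op_add H (mul_fn \<alpha> \<circ> X))
             (mul_fn (\<rho> - vector_field n D a \<alpha> - \<kappa> * \<alpha>) \<circ> X)"
proof (rule ext)
  fix u
  have X_add: "X (v + w) = X v + X w" for v w
    using op1_add[OF assms(1)] assms(2) by simp
  have X_mult: "X (\<alpha> * v) = \<alpha> * X v + vector_field n D a \<alpha> * v" for v
    using op1_mult[OF assms(1)] assms(2) by simp
  have "comm (op_add H (mul_fn \<alpha> \<circ> X)) X u = H (X u) - X (H u) - vector_field n D a \<alpha> * X u"
    by (simp add: X_add X_mult comm_def op_sub_def op_add_def mul_fn_def)
  also have "H (X u) - X (H u) = \<kappa> * H u + \<rho> * X u"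
    using fun_cong[OF assms(3), of u] by (simp add: comm_def op_sub_def op_add_def mul_fn_def)
  finally show "comm (op_add H (mul_fn \<alpha> \<circ> X)) X u = op_add (mul_fn \<kappa> \<circ> op_add H (mul_fn \<alpha> \<circ> X))
             (mul_fn (\<rho> - vector_field n D a \<alpha> - \<kappa> * \<alpha>) \<circ> X) u"
    by (simp add: op_add_def mul_fn_def algebra_simps)
qed

lemma gauged_transform_eq_Dini:
  assumes "diff_field n D" "X2 = op1 n D a0 a" "\<rho> = vector_field n D a \<alpha> + \<kappa> * \<alpha>"
  shows "op_sub (op_add (X2 \<circ> op_add X1 (mul_fn \<alpha>)) (mul_fn \<kappa> \<circ> op_add X1 (mul_fn \<alpha>)))
            (op_add H (mul_fn \<alpha> \<circ> X2))
       = op_add (op_add (op_sub (X2 \<circ> X1) H) (mul_fn \<kappa> \<circ> X1)) (mul_fn \<rho>)"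
    (is "?L = ?R")
proof (rule ext)
  fix u
  have X2_add: "X2 (v + w) = X2 v + X2 w" for v w
    using op1_add[OF assms(1)] assms(2) by simp
  have X2_mult: "X2 (\<alpha> * v) = \<alpha> * X2 v + vector_field n D a \<alpha> * v" for v
    using op1_mult[OF assms(1)] assms(2) by simp
  show "?L u = ?R u"
    by (simp add: X2_add X2_mult assms(3) op_sub_def op_add_def mul_fn_def algebra_simps)
qed

lemma diff_op_mul_fn: "diff_op n D (mul_fn c)"
  unfolding diff_op_def by (rule exI[of _ "[(c, [])]"]) (simp add: mul_fn_def)

theorem theorem2:
  fixes n :: nat and D :: "nat \<Rightarrow> 'a::field_char_0 \<Rightarrow> 'a"
    and X1 X2 H :: "'a \<Rightarrow> 'a" and \<kappa> \<rho> :: 'a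
  assumes "diff_field n D" and "has_coordinates n D" and "linear_pde_closed n D"
    and "first_order n D X1" and "first_order n D X2" and "order_le1 n D H"
    and "comm H X2 = op_add (mul_fn \<kappa> \<circ> H) (mul_fn \<rho> \<circ> X2)"
  shows "\<exists>\<alpha> :: 'a.
    (let Xt = op_add X1 (mul_fn \<alpha>);
         Ht = op_add H (mul_fn \<alpha> \<circ> X2);
         \<psi> = \<kappa>;
         L = op_sub (X1 \<circ> X2) H;
         L_Dini = op_add (op_add (op_sub (X2 \<circ> X1) H) (mul_fn \<kappa> \<circ> X1)) (mul_fn \<rho>);
         L1 = op_sub (op_add (X2 \<circ> Xt) (mul_fn \<psi> \<circ> Xt)) Ht
     in L = op_sub (Xt \<circ> X2) Ht \<and>
        comm Ht X2 = mul_fn \<psi> \<circ> Ht \<and>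
        ILT n D Xt X2 Ht (mul_fn \<psi>) L1 \<and>
        L1 = L_Dini)"
proof -
  obtain a0 a where a: "\<exists>i<n. a i \<noteq> 0" and X2: "X2 = op1 n D a0 a"
    using assms(5) by (auto simp: first_order_def)
  define Ht where "Ht \<alpha> = op_add H (mul_fn \<alpha> \<circ> X2)" for \<alpha>
  \<comment> \<open>the only gauge that could make \<open>Ht\<close> vanish; arbitrary if there is none\<close>
  define g where "g = (SOME g. Ht g = op_zero)"
  obtain \<alpha> where \<alpha>: "vector_field n D a \<alpha> + \<kappa> * \<alpha> = \<rho>" and "\<alpha> \<noteq> g"
    using assms(3) a unfolding linear_pde_closed_def vector_field_def by blast
  have Ht_nonzero: "Ht \<alpha> \<noteq> op_zero"
  proof
    assume "Ht \<alpha> = op_zero"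
    moreover from this have "Ht g = op_zero" unfolding g_def by (rule someI)
    moreover obtain u where "X2 u \<noteq> 0" using first_order_nonzero assms(1,2,5) by blast
    ultimately show False using gauge_zero_unique \<open>\<alpha> \<noteq> g\<close> unfolding Ht_def by metis
  qed
  have "\<rho> - vector_field n D a \<alpha> - \<kappa> * \<alpha> = 0" using \<alpha> by auto
  then have comm_Ht: "comm (Ht \<alpha>) X2 = mul_fn \<kappa> \<circ> Ht \<alpha>"
    using comm_gauge[OF assms(1) X2 assms(7), of \<alpha>]
    by (simp add: Ht_def fun_eq_iff op_add_def mul_fn_def)
  then have "mul_fn \<kappa> \<circ> Ht \<alpha> = op_sub op_zero (comm X2 (Ht \<alpha>))"
    by (auto simp: comm_def op_sub_def op_zero_def fun_eq_iff)
  moreover have "op_sub (X1 \<circ> X2) H = op_sub (op_add X1 (mul_fn \<alpha>) \<circ> X2) (Ht \<alpha>)"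
    by (simp add: fun_eq_iff Ht_def op_sub_def op_add_def mul_fn_def)
  moreover note gauged_transform_eq_Dini[OF assms(1) X2 \<alpha>[symmetric], of X1 H]
  ultimately show ?thesis
    using Ht_nonzero comm_Ht diff_op_mul_fn
    by (intro exI[of _ \<alpha>]) (simp add: Let_def ILT_def Ht_def)
qed

end
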